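(* Let $N\geq 0$ be an integer. Then for all $0<x<\pi/2$, \[ \alpha_N x^4<\left(\frac{x}{\sin x}\right)^2+\frac{x}{\tan x}-\left(2+4x^4\sum_{k=1}^{N}\frac{1}{(\pi^2k^2-x^2)^2}\right)<\beta_N x^4, \] with the best possible constants \[ \alpha_N=\frac{2\psi'''(N+1)}{3\pi^4},\qquad \beta_N=\frac{8\bigl((2N+1)^2\psi'(N+\tfrac12)-4(N+1)\bigr)}{(2N+1)^2\pi^4}. \]
   Context: $\psi=\Gamma'/\Gamma$ is the digamma function, and $\psi',\psi'''$ denote its first and third derivatives (polygamma functions). An empty sum is understood to be zero. *)

theory Defs
  imports "HOL-Analysis.Analysis"
begin

definition F7 :: "nat \<Rightarrow> real \<Rightarrow> real" where
  "F7 N x = (x / sin x)\<^sup>2 + x / tan x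
     - (2 + 4 * x ^ 4 * (\<Sum>k=1..N. 1 / (pi\<^sup>2 * (real k)\<^sup>2 - x\<^sup>2)\<^sup>2))"

definition alpha7 :: "nat \<Rightarrow> real" where
  "alpha7 N = 2 * Polygamma 3 (real N + 1) / (3 * pi ^ 4)"

definition beta7 :: "nat \<Rightarrow> real" where
  "beta7 N = 8 * ((2 * real N + 1)\<^sup>2 * Polygamma 1 (real N + 1/2) - 4 * (real N + 1))
             / ((2 * real N + 1)\<^sup>2 * pi ^ 4)"

end

theory Submission
  imports Defs
begin

(* Partial fractions express S_c(t) = sum_{k>=0} 1 / ((k+c)^2 - t^2)^2 through psi' and psi at
   c - t and c + t.  For c = 1 the reflection formulas for psi and psi' turn this into
   (x / sin x)^2 + x / tan x - 2 = 4 t^4 S_1(t) with x = pi t, and dropping the first N terms gives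
   F7 N x = 4 t^4 S_(N+1)(t).  Termwise, S_(N+1) is continuous and strictly increasing on [0, 1/2],
   so F7 N x / x^4 lies strictly between its values at x = 0 and x = pi/2, namely alpha_N and beta_N,
   and comes arbitrarily close to both. *)

lemma Gamma_reflection_real:
  fixes t :: real
  shows "Gamma t * Gamma (1 - t) = pi / sin (pi * t)"
proof -
  have "complex_of_real (Gamma t * Gamma (1 - t)) = complex_of_real (pi / sin (pi * t))"
    using Gamma_reflection_complex[of "complex_of_real t"]
    by (simp add: Gamma_complex_of_real[symmetric] sin_of_real[symmetric])
  then show ?thesis by (simp only: of_real_eq_iff)
qed

lemma Digamma_reflection_real:
  fixes t :: real
  assumes "0 < t" "t < 1"
  shows "Digamma (1 - t) - Digamma t = pi * cos (pi * t) / sin (pi * t)"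
proof -
  have sin_pos: "sin (pi * t) > 0"
    using assms by (intro sin_gt_zero) auto
  have "((\<lambda>s. Gamma s * Gamma (1 - s)) has_field_derivative
      Gamma t * Gamma (1 - t) * (Digamma t - Digamma (1 - t))) (at t)"
    using assms by (auto intro!: derivative_eq_intros simp: nonpos_Ints_def algebra_simps)
  moreover have "((\<lambda>s. Gamma s * Gamma (1 - s)) has_field_derivative
      Gamma t * Gamma (1 - t) * (- pi * cos (pi * t) / sin (pi * t))) (at t)"
  proof (rule has_field_derivative_transform_within_open)
    show "((\<lambda>s. pi / sin (pi * s)) has_field_derivative
        Gamma t * Gamma (1 - t) * (- pi * cos (pi * t) / sin (pi * t))) (at t)"
      unfolding Gamma_reflection_real using sin_pos
      by (auto intro!: derivative_eq_intros simp: power2_eq_square)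
  qed (use assms Gamma_reflection_real in \<open>auto intro: open_greaterThanLessThan[of 0 1]\<close>)
  ultimately have "Gamma t * Gamma (1 - t) * (Digamma t - Digamma (1 - t))
      = Gamma t * Gamma (1 - t) * (- pi * cos (pi * t) / sin (pi * t))"
    by (rule DERIV_unique)
  moreover have "Gamma t * Gamma (1 - t) \<noteq> 0"
    unfolding Gamma_reflection_real using sin_pos by simp
  ultimately have "Digamma t - Digamma (1 - t) = - pi * cos (pi * t) / sin (pi * t)"
    by (rule mult_left_cancel[THEN iffD1, rotated])
  then show ?thesis
    by simp
qed

lemma trigamma_reflection_real:
  fixes t :: real
  assumes "0 < t" "t < 1"
  shows "Polygamma 1 t + Polygamma 1 (1 - t) = pi\<^sup>2 / (sin (pi * t))\<^sup>2"
proof -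
  have sin_pos: "sin (pi * t) > 0"
    using assms by (intro sin_gt_zero) auto
  have "((\<lambda>s. Digamma (1 - s) - Digamma s) has_field_derivative
      - (Polygamma 1 t + Polygamma 1 (1 - t))) (at t)"
    using assms by (auto intro!: derivative_eq_intros simp: nonpos_Ints_def)
  moreover have "((\<lambda>s. Digamma (1 - s) - Digamma s) has_field_derivative
      - (pi\<^sup>2 / (sin (pi * t))\<^sup>2)) (at t)"
  proof (rule has_field_derivative_transform_within_open)
    show "((\<lambda>s. pi * cos (pi * s) / sin (pi * s)) has_field_derivative
        - (pi\<^sup>2 / (sin (pi * t))\<^sup>2)) (at t)"
      using sin_pos by (auto intro!: derivative_eq_intros simp: field_simps power2_eq_square)
        (use sin_cos_squared_add[of "pi * t"] in algebra)
  qed (use assms Digamma_reflection_real in \<open>auto intro: open_greaterThanLessThan[of 0 1]\<close>)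
  ultimately show ?thesis
    using DERIV_unique by fastforce
qed

lemma Polygamma_1_sums:
  fixes z :: real
  assumes "z > 0"
  shows "(\<lambda>k. 1 / (real k + z)\<^sup>2) sums Polygamma 1 z"
  using Polygamma_LIMSEQ[of z 1] assms by (simp add: inverse_eq_divide add.commute power2_eq_square)

lemma Polygamma_3_sums:
  fixes z :: real
  assumes "z > 0"
  shows "(\<lambda>k. 1 / (real k + z) ^ 4) sums (Polygamma 3 z / 6)"
  using Polygamma_LIMSEQ[of z 3] assms by (simp add: inverse_eq_divide add.commute fact_numeral)

lemma Digamma_diff_sums:
  fixes a b :: real
  assumes "a > 0" "b > 0"
  shows "(\<lambda>k. 1 / (real k + b) - 1 / (real k + a)) sums (Digamma a - Digamma b)"
proof -
  have "(\<lambda>k. inverse (real (Suc k)) - inverse (z + real k)) sums (Digamma z + euler_mascheroni)"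
    if "z > 0" for z :: real
    using summable_Digamma[of z] that by (simp add: Digamma_def summable_sums)
  from sums_diff[OF this[OF \<open>a > 0\<close>] this[OF \<open>b > 0\<close>]] show ?thesis
    by (simp add: inverse_eq_divide add.commute)
qed

lemma inverse_sq_diff_sq_partial_fractions:
  fixes m t :: real
  assumes "t \<noteq> 0" "m - t \<noteq> 0" "m + t \<noteq> 0"
  shows "1 / (m\<^sup>2 - t\<^sup>2)\<^sup>2
    = (1 / (m - t)\<^sup>2 + 1 / (m + t)\<^sup>2 - (1 / (m - t) - 1 / (m + t)) / t) / (4 * t\<^sup>2)"
proof -
  define a b where "a = m - t" and "b = m + t"
  have ab: "a \<noteq> 0" "b \<noteq> 0" "m\<^sup>2 - t\<^sup>2 = a * b"
    using assms by (auto simp: a_def b_def power2_eq_square algebra_simps)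
  have diff: "1 / a - 1 / b = 2 * t / (a * b)"
    using ab by (simp add: a_def b_def field_simps)
  have "1 / a\<^sup>2 + 1 / b\<^sup>2 - (1 / a - 1 / b) / t = (1 / a - 1 / b)\<^sup>2"
    using assms ab unfolding power2_diff by (simp add: diff field_simps power2_eq_square)
  also have "\<dots> = 4 * t\<^sup>2 * (1 / (m\<^sup>2 - t\<^sup>2)\<^sup>2)"
    unfolding diff ab by (simp add: power2_eq_square)
  finally show ?thesis
    using assms by (simp add: a_def b_def)
qed

definition inv_sq_diff_series :: "real \<Rightarrow> real \<Rightarrow> real" where
  "inv_sq_diff_series c t = (\<Sum>k. 1 / ((real k + c)\<^sup>2 - t\<^sup>2)\<^sup>2)"

lemma inv_sq_diff_sums:
  fixes c t :: real
  assumes "t \<noteq> 0" "\<bar>t\<bar> < c"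
  shows "(\<lambda>k. 1 / ((real k + c)\<^sup>2 - t\<^sup>2)\<^sup>2) sums
    ((Polygamma 1 (c - t) + Polygamma 1 (c + t) - (Digamma (c + t) - Digamma (c - t)) / t) / (4 * t\<^sup>2))"
proof -
  have "(\<lambda>k. (1 / (real k + (c - t))\<^sup>2 + 1 / (real k + (c + t))\<^sup>2
      - (1 / (real k + (c - t)) - 1 / (real k + (c + t))) / t) / (4 * t\<^sup>2)) sums
    ((Polygamma 1 (c - t) + Polygamma 1 (c + t) - (Digamma (c + t) - Digamma (c - t)) / t) / (4 * t\<^sup>2))"
    using assms
    by (intro sums_divide sums_diff sums_add Polygamma_1_sums Digamma_diff_sums) auto
  moreover have "1 / ((real k + c)\<^sup>2 - t\<^sup>2)\<^sup>2 = (1 / (real k + (c - t))\<^sup>2 + 1 / (real k + (c + t))\<^sup>2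
      - (1 / (real k + (c - t)) - 1 / (real k + (c + t))) / t) / (4 * t\<^sup>2)" for k
    using assms inverse_sq_diff_sq_partial_fractions[of t "real k + c"] by (simp add: algebra_simps)
  ultimately show ?thesis
    by simp
qed

lemma inv_sq_diff_sums_zero:
  fixes c :: real
  assumes "c > 0"
  shows "(\<lambda>k. 1 / ((real k + c)\<^sup>2 - 0\<^sup>2)\<^sup>2) sums (Polygamma 3 c / 6)"
  using Polygamma_3_sums[OF assms] by (simp add: power2_eq_square power4_eq_xxxx mult.assoc)

lemma summable_inv_sq_diff:
  fixes c t :: real
  assumes "\<bar>t\<bar> < c"
  shows "summable (\<lambda>k. 1 / ((real k + c)\<^sup>2 - t\<^sup>2)\<^sup>2)"
proof (cases "t = 0")
  case True
  with assms show ?thesis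
    using inv_sq_diff_sums_zero[of c] by (simp add: sums_summable)
next
  case False
  with assms show ?thesis
    using inv_sq_diff_sums by (blast intro: sums_summable)
qed

lemma inv_sq_diff_denominator_pos:
  fixes c t :: real
  assumes "\<bar>t\<bar> < c"
  shows "0 < (real k + c)\<^sup>2 - t\<^sup>2"
proof -
  have "t\<^sup>2 < c\<^sup>2"
    using assms power_strict_mono[of "\<bar>t\<bar>" c 2] by simp
  also have "c\<^sup>2 \<le> (real k + c)\<^sup>2"
    using assms by (intro power_mono) auto
  finally show ?thesis by simp
qed

lemma inv_sq_diff_term_strict_mono:
  fixes c s t :: real
  assumes "0 \<le> s" "s < t" "t < c"
  shows "1 / ((real k + c)\<^sup>2 - s\<^sup>2)\<^sup>2 < 1 / ((real k + c)\<^sup>2 - t\<^sup>2)\<^sup>2"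
proof -
  have "0 < (real k + c)\<^sup>2 - t\<^sup>2"
    using assms by (intro inv_sq_diff_denominator_pos) auto
  moreover have "s\<^sup>2 < t\<^sup>2"
    using assms by (intro power_strict_mono) auto
  ultimately show ?thesis
    by (intro divide_strict_left_mono power_strict_mono mult_pos_pos) auto
qed

lemma inv_sq_diff_series_strict_mono_on:
  fixes c :: real
  shows "strict_mono_on {0..<c} (inv_sq_diff_series c)"
proof (rule strict_mono_onI)
  fix s t assume "s \<in> {0..<c}" "t \<in> {0..<c}" "s < t"
  then have summable: "summable (\<lambda>k. 1 / ((real k + c)\<^sup>2 - u\<^sup>2)\<^sup>2)" if "u \<in> {s, t}" for u
    using that by (intro summable_inv_sq_diff) auto
  have "0 < (\<Sum>k. 1 / ((real k + c)\<^sup>2 - t\<^sup>2)\<^sup>2 - 1 / ((real k + c)\<^sup>2 - s\<^sup>2)\<^sup>2)"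
    using \<open>s \<in> _\<close> \<open>t \<in> _\<close> \<open>s < t\<close> summable
    by (intro suminf_pos summable_diff) (auto intro: inv_sq_diff_term_strict_mono)
  also have "\<dots> = inv_sq_diff_series c t - inv_sq_diff_series c s"
    unfolding inv_sq_diff_series_def using summable by (intro suminf_diff [symmetric]) auto
  finally show "inv_sq_diff_series c s < inv_sq_diff_series c t"
    by simp
qed

lemma continuous_on_inv_sq_diff_series:
  fixes b c :: real
  assumes "0 \<le> b" "b < c"
  shows "continuous_on {0..b} (inv_sq_diff_series c)"
proof -
  have bound: "norm (1 / ((real k + c)\<^sup>2 - t\<^sup>2)\<^sup>2) \<le> 1 / ((real k + c)\<^sup>2 - b\<^sup>2)\<^sup>2"
    if "t \<in> {0..b}" for k t
    using that assms inv_sq_diff_term_strict_mono[of t b c k]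
      inv_sq_diff_denominator_pos[of t c k] by (cases "t = b") auto
  have "uniform_limit {0..b} (\<lambda>n t. \<Sum>k<n. 1 / ((real k + c)\<^sup>2 - t\<^sup>2)\<^sup>2)
      (inv_sq_diff_series c) sequentially"
    unfolding inv_sq_diff_series_def[abs_def]
    by (rule Weierstrass_m_test[OF bound summable_inv_sq_diff]) (use assms in auto)
  moreover have "continuous_on {0..b} (\<lambda>t. \<Sum>k<n. 1 / ((real k + c)\<^sup>2 - t\<^sup>2)\<^sup>2)" for n
  proof (intro continuous_intros ballI)
    fix k t assume "t \<in> {0..b}"
    then show "((real k + c)\<^sup>2 - t\<^sup>2)\<^sup>2 \<noteq> 0"
      using assms inv_sq_diff_denominator_pos[of t c k] by auto
  qed
  ultimately show ?thesis
    by (intro uniform_limit_theorem) auto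
qed

lemma strict_mono_on_inv_sq_diff_series_scaled:
  fixes b c d :: real
  assumes "d > 0" "b < c * d"
  shows "strict_mono_on {0..b} (\<lambda>x. inv_sq_diff_series c (x / d))"
proof (rule strict_mono_onI)
  fix r s assume "r \<in> {0..b}" "s \<in> {0..b}" "r < s"
  with assms have "r / d \<in> {0..<c}" "s / d \<in> {0..<c}" "r / d < s / d"
    by (auto simp: field_simps)
  then show "inv_sq_diff_series c (r / d) < inv_sq_diff_series c (s / d)"
    by (rule strict_mono_onD[OF inv_sq_diff_series_strict_mono_on])
qed

lemma continuous_on_inv_sq_diff_series_scaled:
  fixes b c d :: real
  assumes "d > 0" "0 \<le> b" "b < c * d"
  shows "continuous_on {0..b} (\<lambda>x. inv_sq_diff_series c (x / d))"
  using assms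
  by (intro continuous_on_compose2[OF continuous_on_inv_sq_diff_series[of "b / d"]] continuous_intros)
    (auto simp: field_simps)

lemma inv_sq_diff_series_zero:
  fixes c :: real
  assumes "c > 0"
  shows "inv_sq_diff_series c 0 = Polygamma 3 c / 6"
  using inv_sq_diff_sums_zero[OF assms] by (simp add: inv_sq_diff_series_def sums_iff)

lemma inv_sq_diff_series_half:
  fixes z :: real
  assumes "z > 0"
  shows "inv_sq_diff_series (z + 1/2) (1/2) = 2 * Polygamma 1 z - 1 / z\<^sup>2 - 2 / z"
proof -
  have "z \<noteq> 0"
    using assms by simp
  have "Polygamma 1 (z + 1) = Polygamma 1 z - 1 / z\<^sup>2"
    using Polygamma_plus1[OF \<open>z \<noteq> 0\<close>, of 1] by (simp add: power2_eq_square)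
  moreover have "Digamma (z + 1) - Digamma z = 1 / z"
    using Digamma_plus1[OF \<open>z \<noteq> 0\<close>] by simp
  moreover have "inv_sq_diff_series (z + 1/2) (1/2) =
      (Polygamma 1 z + Polygamma 1 (z + 1) - (Digamma (z + 1) - Digamma z) / (1/2)) / (4 * (1/2)\<^sup>2)"
    using inv_sq_diff_sums[of "1/2" "z + 1/2"] assms
    by (simp add: inv_sq_diff_series_def sums_iff add.assoc)
  ultimately show ?thesis
    by (simp add: power2_eq_square)
qed

lemma inv_sq_diff_series_shift:
  fixes c t :: real
  assumes "\<bar>t\<bar> < c"
  shows "inv_sq_diff_series (c + real n) t
    = inv_sq_diff_series c t - (\<Sum>k<n. 1 / ((real k + c)\<^sup>2 - t\<^sup>2)\<^sup>2)"
proof -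
  have "(\<lambda>k. 1 / ((real (k + n) + c)\<^sup>2 - t\<^sup>2)\<^sup>2) sums
      (inv_sq_diff_series c t - (\<Sum>k<n. 1 / ((real k + c)\<^sup>2 - t\<^sup>2)\<^sup>2))"
    using summable_inv_sq_diff[OF assms] unfolding inv_sq_diff_series_def
    by (intro sums_split_initial_segment summable_sums)
  then show ?thesis
    by (simp add: inv_sq_diff_series_def sums_iff algebra_simps)
qed

lemma cosec_sq_cot_eq_inv_sq_diff_series:
  fixes t :: real
  assumes "0 < t" "t < 1"
  shows "(pi * t / sin (pi * t))\<^sup>2 + pi * t / tan (pi * t) - 2 = 4 * t ^ 4 * inv_sq_diff_series 1 t"
proof -
  have sin_pos: "sin (pi * t) > 0"
    using assms by (intro sin_gt_zero) auto
  have "t \<noteq> 0"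
    using assms by simp
  have trigamma: "Polygamma 1 (1 - t) + Polygamma 1 (1 + t) = pi\<^sup>2 / (sin (pi * t))\<^sup>2 - 1 / t\<^sup>2"
    using trigamma_reflection_real[OF assms] Polygamma_plus1[OF \<open>t \<noteq> 0\<close>, of 1]
    by (simp add: power2_eq_square add.commute)
  have digamma: "Digamma (1 + t) - Digamma (1 - t) = 1 / t - pi * cos (pi * t) / sin (pi * t)"
    using Digamma_reflection_real[OF assms] Digamma_plus1[OF \<open>t \<noteq> 0\<close>]
    by (simp add: add.commute)
  have "inv_sq_diff_series 1 t = (Polygamma 1 (1 - t) + Polygamma 1 (1 + t)
      - (Digamma (1 + t) - Digamma (1 - t)) / t) / (4 * t\<^sup>2)"
    using inv_sq_diff_sums[of t 1] assms by (simp add: inv_sq_diff_series_def sums_iff)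
  then have "4 * t ^ 4 * inv_sq_diff_series 1 t = 4 * t ^ 4 * ((pi\<^sup>2 / (sin (pi * t))\<^sup>2 - 1 / t\<^sup>2
      - (1 / t - pi * cos (pi * t) / sin (pi * t)) / t) / (4 * t\<^sup>2))"
    unfolding trigamma digamma by simp
  also have "\<dots> = (pi * t / sin (pi * t))\<^sup>2 + pi * t / tan (pi * t) - 2"
    using sin_pos \<open>t \<noteq> 0\<close> by (simp add: tan_def field_simps power2_eq_square power4_eq_xxxx)
  finally show ?thesis
    by simp
qed

lemma F7_eq_inv_sq_diff_series:
  assumes "0 < x" "x < pi"
  shows "F7 N x = 4 * inv_sq_diff_series (real N + 1) (x / pi) / pi ^ 4 * x ^ 4"
proof -
  define t where "t = x / pi"
  have t: "0 < t" "t < 1" "x = pi * t"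
    using assms by (simp_all add: t_def field_simps)
  define partial where "partial = (\<Sum>k<N. 1 / ((real k + 1)\<^sup>2 - t\<^sup>2)\<^sup>2)"
  have "(\<Sum>k=1..N. 1 / (pi\<^sup>2 * (real k)\<^sup>2 - x\<^sup>2)\<^sup>2) = partial / pi ^ 4"
    unfolding partial_def sum_divide_distrib t(3)
    by (rule sum.reindex_bij_witness[of _ Suc "\<lambda>k. k - 1"])
      (auto simp: power2_eq_square power4_eq_xxxx algebra_simps)
  then have "F7 N x = 4 * t ^ 4 * inv_sq_diff_series 1 t - 4 * (pi * t) ^ 4 * (partial / pi ^ 4)"
    unfolding F7_def using cosec_sq_cot_eq_inv_sq_diff_series[OF t(1,2)] by (simp add: t(3))
  also have "\<dots> = 4 * t ^ 4 * (inv_sq_diff_series 1 t - partial)"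
    by (simp add: algebra_simps)
  also have "inv_sq_diff_series 1 t - partial = inv_sq_diff_series (real N + 1) t"
    using inv_sq_diff_series_shift[of t 1 N] t by (simp add: partial_def add.commute)
  finally show ?thesis
    by (simp add: t_def[symmetric] t(3) field_simps)
qed

lemma sharp_bounds_of_strict_mono_on:
  fixes F h w :: "real \<Rightarrow> real"
  assumes "a < b" "continuous_on {a..b} h" "strict_mono_on {a..b} h"
    and "\<And>x. a < x \<Longrightarrow> x < b \<Longrightarrow> w x > 0"
    and "\<And>x. a < x \<Longrightarrow> x < b \<Longrightarrow> F x = h x * w x"
  shows "(\<forall>x. a < x \<and> x < b \<longrightarrow> h a * w x < F x \<and> F x < h b * w x)
    \<and> (\<forall>A. A > h a \<longrightarrow> (\<exists>x. a < x \<and> x < b \<and> \<not> (A * w x < F x)))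
    \<and> (\<forall>B. B < h b \<longrightarrow> (\<exists>x. a < x \<and> x < b \<and> \<not> (F x < B * w x)))"
proof (intro conjI allI impI)
  fix x assume "a < x \<and> x < b"
  then have "h a < h x" "h x < h b" "w x > 0"
    using assms(3,4) by (auto intro: strict_mono_onD)
  with assms(5) \<open>a < x \<and> x < b\<close> show "h a * w x < F x" "F x < h b * w x"
    by auto
next
  fix A assume "A > h a"
  with continuous_on_Icc_at_rightD[OF assms(2,1)]
  have "\<forall>\<^sub>F x in at_right a. h x < A \<and> x \<in> {a<..<b}"
    using eventually_at_right_real[OF assms(1)] by (auto dest: order_tendstoD elim: eventually_conj)
  then obtain x where "h x < A" "a < x" "x < b"
    by (auto dest: eventually_happens)
  with assms(4,5) show "\<exists>x. a < x \<and> x < b \<and> \<not> (A * w x < F x)"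
    by (intro exI[of _ x]) auto
next
  fix B assume "B < h b"
  with continuous_on_Icc_at_leftD[OF assms(2,1)]
  have "\<forall>\<^sub>F x in at_left b. B < h x \<and> x \<in> {a<..<b}"
    using eventually_at_left_real[OF assms(1)] by (auto dest: order_tendstoD elim: eventually_conj)
  then obtain x where "B < h x" "a < x" "x < b"
    by (auto dest: eventually_happens)
  with assms(4,5) show "\<exists>x. a < x \<and> x < b \<and> \<not> (F x < B * w x)"
    by (intro exI[of _ x]) auto
qed

lemma beta7_alt_def:
  "beta7 N = 4 * (2 * Polygamma 1 (real N + 1/2) - 1 / (real N + 1/2)\<^sup>2 - 2 / (real N + 1/2)) / pi ^ 4"
proof -
  define m where "m = 2 * real N + 1"
  have "m > 0" and half: "real N + 1/2 = m / 2" and four: "4 * (real N + 1) = 2 * (m + 1)"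
    by (simp_all add: m_def)
  then show ?thesis
    unfolding beta7_def m_def[symmetric] half four by (simp add: field_simps power2_eq_square)
qed

theorem theorem7:
  fixes N :: nat
  shows "(\<forall>x. 0 < x \<and> x < pi/2 \<longrightarrow> alpha7 N * x ^ 4 < F7 N x \<and> F7 N x < beta7 N * x ^ 4)
    \<and> (\<forall>a. a > alpha7 N \<longrightarrow> (\<exists>x. 0 < x \<and> x < pi/2 \<and> \<not> (a * x ^ 4 < F7 N x)))
    \<and> (\<forall>b. b < beta7 N \<longrightarrow> (\<exists>x. 0 < x \<and> x < pi/2 \<and> \<not> (F7 N x < b * x ^ 4)))"
proof -
  define h where "h x = 4 * inv_sq_diff_series (real N + 1) (x / pi) / pi ^ 4" for x
  have "h 0 = alpha7 N"
    unfolding h_def alpha7_def by (simp add: inv_sq_diff_series_zero)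
  moreover have "h (pi / 2) = beta7 N"
    using inv_sq_diff_series_half[of "real N + 1/2"]
    unfolding h_def beta7_alt_def by (simp add: add.assoc)
  moreover have "continuous_on {0..pi/2} h"
    using continuous_on_inv_sq_diff_series_scaled[of pi "pi/2" "real N + 1"]
    unfolding h_def by (auto intro!: continuous_intros)
  moreover have "strict_mono_on {0..pi/2} h"
    using strict_mono_on_inv_sq_diff_series_scaled[of pi "pi/2" "real N + 1"]
    unfolding h_def by (auto intro!: strict_mono_onI divide_strict_right_mono dest: strict_mono_onD)
  ultimately show ?thesis
    using sharp_bounds_of_strict_mono_on[of 0 "pi/2" h "\<lambda>x. x ^ 4" "F7 N"]
      F7_eq_inv_sq_diff_series[of _ N] unfolding h_def by simp
qed

end
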